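(* Let $A,B$ be commutative rings, $f:A\to B$ a ring homomorphism and $J$ an ideal of $B$ with $J\subseteq\operatorname{Nil}(B)$. Let $\mathfrak a$ be an ideal of $A$ and $\mathfrak p$ a prime ideal of $A$. Then (1) $\mathfrak p$ is a minimal prime over $\mathfrak a$ if and only if $\mathfrak p^{\prime_f}$ is a minimal prime over $\mathfrak a^e$; (2) $\operatorname{ht}\mathfrak a=\operatorname{ht}\mathfrak a^e$; (3) the only minimal prime ideal of $A\bowtie^fJ$ over $\mathfrak p^e$ is $\mathfrak p^{\prime_f}$; in particular $\operatorname{ht}\mathfrak p^e=\operatorname{ht}\mathfrak p^{\prime_f}$.
   Context: $\operatorname{Nil}(B)$ is the nilradical of $B$. $A\bowtie^fJ=\{(a,f(a)+j): a\in A,\ j\in J\}\subseteq A\times B$; $\iota_A(x)=(x,f(x))$ and $\mathfrak a^e=\iota_A(\mathfrak a)(A\bowtie^fJ)$. For a prime $\mathfrak p$ of $A$, $\mathfrak p^{\prime_f}=\{(p,f(p)+j): p\in\mathfrak p,\ j\in J\}$. Height of an ideal $I$ of a ring $R$: $\operatorname{ht}I=\inf\{\dim R_\mathfrak P:\mathfrak P\supseteq I$ prime$\}$. *)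

theory Defs
  imports "HOL-Algebra.Algebra" "HOL-Library.Extended_Nat"
begin

definition nilradical :: "('b, 'm) ring_scheme \<Rightarrow> 'b set" where
  "nilradical B = {b \<in> carrier B. \<exists>n::nat. b [^]\<^bsub>B\<^esub> n = \<zero>\<^bsub>B\<^esub>}"

definition amalg ::
  "('a, 'm) ring_scheme \<Rightarrow> ('b, 'n) ring_scheme \<Rightarrow> ('a \<Rightarrow> 'b) \<Rightarrow> 'b set \<Rightarrow> ('a \<times> 'b) ring" where
  "amalg A B f J = (RDirProd A B)
     \<lparr>carrier := {(a, f a \<oplus>\<^bsub>B\<^esub> j) | a j. a \<in> carrier A \<and> j \<in> J}\<rparr>"

definition iotaA :: "('a \<Rightarrow> 'b) \<Rightarrow> 'a \<Rightarrow> 'a \<times> 'b" where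
  "iotaA f x = (x, f x)"

definition ext_ideal ::
  "('a, 'm) ring_scheme \<Rightarrow> ('b, 'n) ring_scheme \<Rightarrow> ('a \<Rightarrow> 'b) \<Rightarrow> 'b set \<Rightarrow> 'a set \<Rightarrow> ('a \<times> 'b) set" where
  "ext_ideal A B f J I = genideal (amalg A B f J) (iotaA f ` I)"

definition prime_f ::
  "('b, 'n) ring_scheme \<Rightarrow> ('a \<Rightarrow> 'b) \<Rightarrow> 'b set \<Rightarrow> 'a set \<Rightarrow> ('a \<times> 'b) set" where
  "prime_f B f J P = {(p, f p \<oplus>\<^bsub>B\<^esub> j) | p j. p \<in> P \<and> j \<in> J}"

definition minimal_prime_over :: "('a, 'm) ring_scheme \<Rightarrow> 'a set \<Rightarrow> 'a set \<Rightarrow> bool" where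
  "minimal_prime_over R I P \<longleftrightarrow> primeideal P R \<and> I \<subseteq> P \<and>
     (\<forall>Q. primeideal Q R \<and> I \<subseteq> Q \<and> Q \<subseteq> P \<longrightarrow> Q = P)"

text \<open>Krull dimension of the localization R_P, for a prime P: the supremum of the lengths n of
  strictly increasing chains of prime ideals P_0 < P_1 < ... < P_n of R contained in P
  (these correspond bijectively to chains of primes of R_P).\<close>
definition dim_loc :: "('a, 'm) ring_scheme \<Rightarrow> 'a set \<Rightarrow> enat" where
  "dim_loc R P = Sup {enat n | n. \<exists>C :: nat \<Rightarrow> 'a set.
       (\<forall>i\<le>n. primeideal (C i) R \<and> C i \<subseteq> P) \<and> (\<forall>i<n. C i \<subset> C (Suc i))}"

text \<open>Height of an ideal: ht I = inf { dim R_P : P prime, P contains I } (infinity if no such P).\<close>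
definition height :: "('a, 'm) ring_scheme \<Rightarrow> 'a set \<Rightarrow> enat" where
  "height R I = Inf {dim_loc R P | P. primeideal P R \<and> I \<subseteq> P}"

end

theory Submission
  imports Defs
begin

text \<open>Since \<open>J\<close> is nil, every prime of \<open>A \<bowtie>\<^sup>f J\<close> contains \<open>0 \<times> J\<close>, and hence
  \<open>\<p> \<mapsto> \<p>'\<^sub>f\<close> is an inclusion-preserving bijection from the primes of \<open>A\<close> onto
  those of \<open>A \<bowtie>\<^sup>f J\<close>, inverse to contraction along \<open>\<iota>\<^sub>A\<close>. Moreover \<open>\<a>\<^sup>e \<subseteq> \<q>'\<^sub>f\<close> iff
  \<open>\<a> \<subseteq> \<q>\<close>. Minimal primes and heights only depend on the poset of primes and on which primes
  contain a given ideal, so all three statements are transported along this bijection; for (3)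
  note that \<open>\<p>\<^sup>e\<close> and \<open>\<p>'\<^sub>f\<close> lie in exactly the same primes.\<close>

lemma (in primeideal) mem_of_nat_pow_mem:
  assumes "x \<in> carrier R" "x [^] (n::nat) \<in> I"
  shows "x \<in> I"
  using assms(2)
proof (induction n)
  case 0
  then show ?case using I_notcarr one_imp_carrier by simp
next
  case (Suc n)
  then show ?case using I_prime[of "x [^] n" x] assms(1) by auto
qed

lemma (in primeideal) nilpotent_mem:
  "x \<in> carrier R \<Longrightarrow> x [^] (n::nat) = \<zero> \<Longrightarrow> x \<in> I"
  using mem_of_nat_pow_mem[of x n] zero_closed by simp

lemma minimal_prime_over_cong:
  assumes "\<And>Q. primeideal Q R \<Longrightarrow> I \<subseteq> Q \<longleftrightarrow> I' \<subseteq> Q"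
  shows "minimal_prime_over R I = minimal_prime_over R I'"
  unfolding minimal_prime_over_def by (intro ext) (simp add: assms cong: conj_cong)

lemma minimal_prime_over_self: "primeideal P R \<Longrightarrow> {Q. minimal_prime_over R P Q} = {P}"
  unfolding minimal_prime_over_def by auto

lemma height_cong:
  assumes "\<And>Q. primeideal Q R \<Longrightarrow> I \<subseteq> Q \<longleftrightarrow> I' \<subseteq> Q"
  shows "height R I = height R I'"
  unfolding height_def by (simp add: assms cong: conj_cong)

definition prime_chain_below :: "('a, 'm) ring_scheme \<Rightarrow> 'a set \<Rightarrow> nat \<Rightarrow> (nat \<Rightarrow> 'a set) \<Rightarrow> bool"
  where "prime_chain_below R P n C \<longleftrightarrow>
    (\<forall>i\<le>n. primeideal (C i) R \<and> C i \<subseteq> P) \<and> (\<forall>i<n. C i \<subset> C (Suc i))"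

lemma dim_loc_prime_chain_below:
  "dim_loc R P = Sup {enat n | n. \<exists>C. prime_chain_below R P n C}"
  unfolding dim_loc_def prime_chain_below_def ..

locale prime_spectrum_iso =
  fixes A :: "('a, 'm) ring_scheme" and R :: "('c, 'k) ring_scheme" and \<phi> :: "'a set \<Rightarrow> 'c set"
  assumes primeideal_map: "primeideal P A \<Longrightarrow> primeideal (\<phi> P) R"
    and primeideal_surj: "primeideal Q R \<Longrightarrow> \<exists>P. primeideal P A \<and> Q = \<phi> P"
    and map_subset_iff: "primeideal P A \<Longrightarrow> primeideal P' A \<Longrightarrow> \<phi> P \<subseteq> \<phi> P' \<longleftrightarrow> P \<subseteq> P'"
begin

lemma map_eq_iff: "primeideal P A \<Longrightarrow> primeideal P' A \<Longrightarrow> \<phi> P = \<phi> P' \<longleftrightarrow> P = P'"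
  by (simp add: order_eq_iff map_subset_iff)

lemma all_primes_iff: "(\<forall>Q. primeideal Q R \<longrightarrow> T Q) \<longleftrightarrow> (\<forall>P. primeideal P A \<longrightarrow> T (\<phi> P))"
  using primeideal_map primeideal_surj by blast

lemma map_psubset_iff: "primeideal P A \<Longrightarrow> primeideal P' A \<Longrightarrow> \<phi> P \<subset> \<phi> P' \<longleftrightarrow> P \<subset> P'"
  by (simp add: less_le_not_le map_subset_iff)

lemma prime_chain_below_iff:
  assumes P: "primeideal P A"
  shows "(\<exists>C. prime_chain_below R (\<phi> P) n C) \<longleftrightarrow> (\<exists>D. prime_chain_below A P n D)"
proof
  assume "\<exists>C. prime_chain_below R (\<phi> P) n C"
  then obtain C where C_prime: "\<And>i. i \<le> n \<Longrightarrow> primeideal (C i) R"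
    and C_below: "\<And>i. i \<le> n \<Longrightarrow> C i \<subseteq> \<phi> P"
    and C_strict: "\<And>i. i < n \<Longrightarrow> C i \<subset> C (Suc i)"
    unfolding prime_chain_below_def by blast
  define D where "D i = (SOME D. primeideal D A \<and> C i = \<phi> D)" for i
  have D_spec: "primeideal (D i) A" "C i = \<phi> (D i)" if "i \<le> n" for i
    using someI_ex[OF primeideal_surj[OF C_prime[OF that]]] unfolding D_def by auto
  have "prime_chain_below A P n D"
    unfolding prime_chain_below_def
  proof (intro conjI allI impI)
    fix i assume i: "i \<le> n"
    show "primeideal (D i) A" using D_spec(1)[OF i] .
    show "D i \<subseteq> P" using C_below[OF i] D_spec[OF i] map_subset_iff[OF _ P] by simp
  next
    fix i assume "i < n"
    then show "D i \<subset> D (Suc i)"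
      using C_strict[of i] D_spec[of i] D_spec[of "Suc i"] map_psubset_iff[of "D i" "D (Suc i)"]
      by simp
  qed
  then show "\<exists>D. prime_chain_below A P n D" by blast
next
  assume "\<exists>D. prime_chain_below A P n D"
  then obtain D where D: "prime_chain_below A P n D" ..
  have "prime_chain_below R (\<phi> P) n (\<phi> \<circ> D)"
    unfolding prime_chain_below_def
  proof (intro conjI allI impI)
    fix i assume "i \<le> n"
    then show "primeideal ((\<phi> \<circ> D) i) R" "(\<phi> \<circ> D) i \<subseteq> \<phi> P"
      using D P by (simp_all add: prime_chain_below_def primeideal_map map_subset_iff)
  next
    fix i assume "i < n"
    then show "(\<phi> \<circ> D) i \<subset> (\<phi> \<circ> D) (Suc i)"
      using D by (simp add: prime_chain_below_def map_psubset_iff)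
  qed
  then show "\<exists>C. prime_chain_below R (\<phi> P) n C" by blast
qed

lemma dim_loc_map: "primeideal P A \<Longrightarrow> dim_loc R (\<phi> P) = dim_loc A P"
  by (simp add: dim_loc_prime_chain_below prime_chain_below_iff)

context
  fixes I :: "'a set" and I' :: "'c set"
  assumes subset_map_iff: "primeideal Q A \<Longrightarrow> I' \<subseteq> \<phi> Q \<longleftrightarrow> I \<subseteq> Q"
begin

lemma minimal_prime_over_map_iff:
  assumes P: "primeideal P A"
  shows "minimal_prime_over R I' (\<phi> P) \<longleftrightarrow> minimal_prime_over A I P"
proof -
  have "(\<forall>Q. primeideal Q R \<longrightarrow> I' \<subseteq> Q \<and> Q \<subseteq> \<phi> P \<longrightarrow> Q = \<phi> P)
    \<longleftrightarrow> (\<forall>Q. primeideal Q A \<longrightarrow> I' \<subseteq> \<phi> Q \<and> \<phi> Q \<subseteq> \<phi> P \<longrightarrow> \<phi> Q = \<phi> P)"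
    by (rule all_primes_iff)
  also have "\<dots> \<longleftrightarrow> (\<forall>Q. primeideal Q A \<longrightarrow> I \<subseteq> Q \<and> Q \<subseteq> P \<longrightarrow> Q = P)"
    using P subset_map_iff map_subset_iff map_eq_iff by meson
  finally show ?thesis
    unfolding minimal_prime_over_def using P primeideal_map subset_map_iff by auto
qed

lemma primes_above_map: "{Q. primeideal Q R \<and> I' \<subseteq> Q} = \<phi> ` {P. primeideal P A \<and> I \<subseteq> P}"
proof (intro equalityI subsetI)
  fix Q assume "Q \<in> {Q. primeideal Q R \<and> I' \<subseteq> Q}"
  then obtain P where "primeideal P A" "Q = \<phi> P" "I' \<subseteq> Q"
    using primeideal_surj by blast
  then show "Q \<in> \<phi> ` {P. primeideal P A \<and> I \<subseteq> P}"
    using subset_map_iff by blast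
qed (use primeideal_map subset_map_iff in blast)

lemma height_map: "height R I' = height A I"
proof -
  have "{dim_loc R Q | Q. primeideal Q R \<and> I' \<subseteq> Q} = dim_loc R ` {Q. primeideal Q R \<and> I' \<subseteq> Q}"
    by blast
  also have "\<dots> = (\<lambda>P. dim_loc R (\<phi> P)) ` {P. primeideal P A \<and> I \<subseteq> P}"
    unfolding primes_above_map by (simp add: image_image)
  also have "\<dots> = {dim_loc A P | P. primeideal P A \<and> I \<subseteq> P}"
    using dim_loc_map by force
  finally show ?thesis
    unfolding height_def by simp
qed

end

end

lemma RDirProd_mult [simp]: "(a, b) \<otimes>\<^bsub>RDirProd A B\<^esub> (c, d) = (a \<otimes>\<^bsub>A\<^esub> c, b \<otimes>\<^bsub>B\<^esub> d)"
  by (simp add: RDirProd_def DirProd_def monoid.defs)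

lemma RDirProd_add [simp]: "(a, b) \<oplus>\<^bsub>RDirProd A B\<^esub> (c, d) = (a \<oplus>\<^bsub>A\<^esub> c, b \<oplus>\<^bsub>B\<^esub> d)"
  by (simp add: RDirProd_def DirProd_def monoid.defs)

lemma RDirProd_one [simp]: "\<one>\<^bsub>RDirProd A B\<^esub> = (\<one>\<^bsub>A\<^esub>, \<one>\<^bsub>B\<^esub>)"
  by (simp add: RDirProd_def DirProd_def monoid.defs)

lemma RDirProd_zero [simp]: "\<zero>\<^bsub>RDirProd A B\<^esub> = (\<zero>\<^bsub>A\<^esub>, \<zero>\<^bsub>B\<^esub>)"
  by (simp add: RDirProd_def DirProd_def monoid.defs)

lemma RDirProd_a_inv:
  assumes "ring A" "ring B" "a \<in> carrier A" "b \<in> carrier B"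
  shows "\<ominus>\<^bsub>RDirProd A B\<^esub> (a, b) = (\<ominus>\<^bsub>A\<^esub> a, \<ominus>\<^bsub>B\<^esub> b)"
proof -
  interpret A: ring A by fact
  interpret B: ring B by fact
  interpret ring "RDirProd A B" by (rule RDirProd_ring) fact+
  show ?thesis
    by (rule minus_equality) (simp_all add: assms RDirProd_carrier A.l_neg B.l_neg)
qed

lemma amalg_mult [simp]: "(a, b) \<otimes>\<^bsub>amalg A B f J\<^esub> (c, d) = (a \<otimes>\<^bsub>A\<^esub> c, b \<otimes>\<^bsub>B\<^esub> d)"
  by (simp add: amalg_def)

lemma amalg_add [simp]: "(a, b) \<oplus>\<^bsub>amalg A B f J\<^esub> (c, d) = (a \<oplus>\<^bsub>A\<^esub> c, b \<oplus>\<^bsub>B\<^esub> d)"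
  by (simp add: amalg_def)

lemma amalg_one [simp]: "\<one>\<^bsub>amalg A B f J\<^esub> = (\<one>\<^bsub>A\<^esub>, \<one>\<^bsub>B\<^esub>)"
  by (simp add: amalg_def)

lemma amalg_zero [simp]: "\<zero>\<^bsub>amalg A B f J\<^esub> = (\<zero>\<^bsub>A\<^esub>, \<zero>\<^bsub>B\<^esub>)"
  by (simp add: amalg_def)

lemma amalg_nat_pow: "(a, b) [^]\<^bsub>amalg A B f J\<^esub> (n::nat) = (a [^]\<^bsub>A\<^esub> n, b [^]\<^bsub>B\<^esub> n)"
  by (induction n) simp_all

lemma carrier_amalg: "carrier (amalg A B f J) = {(a, f a \<oplus>\<^bsub>B\<^esub> j) | a j. a \<in> carrier A \<and> j \<in> J}"
  by (simp add: amalg_def)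

lemma mem_carrier_amalg_iff:
  "(a, b) \<in> carrier (amalg A B f J) \<longleftrightarrow> a \<in> carrier A \<and> (\<exists>j\<in>J. b = f a \<oplus>\<^bsub>B\<^esub> j)"
  by (auto simp: carrier_amalg)

lemma fst_image_prime_f: "J \<noteq> {} \<Longrightarrow> fst ` prime_f B f J P = P"
  by (force simp: prime_f_def image_iff)

lemma prime_f_subset_iff:
  assumes "J \<noteq> {}"
  shows "prime_f B f J P \<subseteq> prime_f B f J Q \<longleftrightarrow> P \<subseteq> Q"
proof
  assume "prime_f B f J P \<subseteq> prime_f B f J Q"
  then have "fst ` prime_f B f J P \<subseteq> fst ` prime_f B f J Q"
    by (rule image_mono)
  then show "P \<subseteq> Q"
    by (simp only: fst_image_prime_f[OF assms])
qed (auto simp: prime_f_def)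

locale amalgamation = A?: cring A + B?: cring B
  for A :: "('a, 'm) ring_scheme" and B :: "('b, 'n) ring_scheme" +
  fixes f :: "'a \<Rightarrow> 'b" and J :: "'b set"
  assumes f_hom: "f \<in> ring_hom A B" and J_ideal: "ideal J B" and J_nil: "J \<subseteq> nilradical B"
begin

abbreviation AJ :: "('a \<times> 'b) ring" where "AJ \<equiv> amalg A B f J"

sublocale f: ring_hom_cring A B f
  by unfold_locales (rule f_hom)

sublocale J: ideal J B
  by (rule J_ideal)

lemma J_not_empty: "J \<noteq> {}"
  using J.zero_closed by blast

lemma cring_amalg: "cring AJ"
proof -
  interpret P: ring "RDirProd A B"
    by (rule RDirProd_ring[OF A.ring_axioms B.ring_axioms])
  have carrier: "carrier AJ \<subseteq> carrier (RDirProd A B)"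
    by (auto simp: carrier_amalg RDirProd_carrier J.Icarr)
  have "subring (carrier AJ) (RDirProd A B)"
  proof (rule P.subringI[OF carrier])
    show "\<one>\<^bsub>RDirProd A B\<^esub> \<in> carrier AJ"
      using J.zero_closed by (auto simp: mem_carrier_amalg_iff)
  next
    fix h assume "h \<in> carrier AJ"
    then obtain a j where h: "h = (a, f a \<oplus>\<^bsub>B\<^esub> j)" "a \<in> carrier A" "j \<in> J"
      by (auto simp: carrier_amalg)
    then show "\<ominus>\<^bsub>RDirProd A B\<^esub> h \<in> carrier AJ"
      using J.a_inv_closed J.Icarr
      by (auto simp: RDirProd_a_inv[OF A.ring_axioms B.ring_axioms] mem_carrier_amalg_iff B.minus_add)
  next
    fix h1 h2 assume "h1 \<in> carrier AJ" "h2 \<in> carrier AJ"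
    then obtain a j b k where h: "h1 = (a, f a \<oplus>\<^bsub>B\<^esub> j)" "h2 = (b, f b \<oplus>\<^bsub>B\<^esub> k)"
      and carr: "a \<in> carrier A" "b \<in> carrier A" "j \<in> J" "k \<in> J"
      by (auto simp: carrier_amalg)
    have carr_B: "f a \<in> carrier B" "f b \<in> carrier B" "j \<in> carrier B" "k \<in> carrier B"
      using carr J.Icarr by auto
    have "(f a \<oplus>\<^bsub>B\<^esub> j) \<otimes>\<^bsub>B\<^esub> (f b \<oplus>\<^bsub>B\<^esub> k)
        = f (a \<otimes>\<^bsub>A\<^esub> b) \<oplus>\<^bsub>B\<^esub> (f a \<otimes>\<^bsub>B\<^esub> k \<oplus>\<^bsub>B\<^esub> j \<otimes>\<^bsub>B\<^esub> f b \<oplus>\<^bsub>B\<^esub> j \<otimes>\<^bsub>B\<^esub> k)"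
      unfolding f.hom_mult[OF carr(1,2)] using carr_B by algebra
    moreover have "f a \<otimes>\<^bsub>B\<^esub> k \<oplus>\<^bsub>B\<^esub> j \<otimes>\<^bsub>B\<^esub> f b \<oplus>\<^bsub>B\<^esub> j \<otimes>\<^bsub>B\<^esub> k \<in> J"
      using carr carr_B by (simp add: J.a_closed J.I_l_closed J.I_r_closed)
    ultimately show "h1 \<otimes>\<^bsub>RDirProd A B\<^esub> h2 \<in> carrier AJ"
      using h carr by (auto simp: mem_carrier_amalg_iff)
    have "(f a \<oplus>\<^bsub>B\<^esub> j) \<oplus>\<^bsub>B\<^esub> (f b \<oplus>\<^bsub>B\<^esub> k) = f (a \<oplus>\<^bsub>A\<^esub> b) \<oplus>\<^bsub>B\<^esub> (j \<oplus>\<^bsub>B\<^esub> k)"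
      unfolding f.hom_add[OF carr(1,2)] using carr_B by algebra
    then show "h1 \<oplus>\<^bsub>RDirProd A B\<^esub> h2 \<in> carrier AJ"
      using h carr J.a_closed by (auto simp: mem_carrier_amalg_iff)
  qed
  moreover have "subcring (carrier AJ) (RDirProd A B)"
    by (rule P.subcringI[OF calculation]) (auto simp: carrier_amalg A.m_comm B.m_comm J.Icarr)
  ultimately show ?thesis
    using P.subcring_iff[OF carrier] by (simp add: amalg_def)
qed

lemma ring_amalg: "ring AJ"
  using cring_amalg by (rule cring.axioms(1))

lemma fst_ring_hom: "ring_hom_ring AJ A fst"
  by (rule ring_hom_ringI[OF ring_amalg A.ring_axioms]) (auto simp: carrier_amalg)

lemma iotaA_ring_hom: "ring_hom_ring A AJ (iotaA f)"
  by (rule ring_hom_ringI[OF A.ring_axioms ring_amalg])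
    (use J.zero_closed in \<open>auto simp: iotaA_def mem_carrier_amalg_iff\<close>)

lemma prime_f_eq_vimage: "P \<subseteq> carrier A \<Longrightarrow> prime_f B f J P = {r \<in> carrier AJ. fst r \<in> P}"
  by (auto simp: prime_f_def carrier_amalg)

lemma primeideal_prime_f:
  assumes P: "primeideal P A"
  shows "primeideal (prime_f B f J P) AJ"
proof -
  have "P \<subseteq> carrier A"
    using ideal.Icarr[OF primeideal.axioms(1)[OF P]] by blast
  then show ?thesis
    using ring_hom_ring.primeideal_vimage[OF fst_ring_hom cring_amalg P] by (simp add: prime_f_eq_vimage)
qed

lemma ideal_prime_f:
  assumes P: "ideal P A"
  shows "ideal (prime_f B f J P) AJ"
proof -
  have "P \<subseteq> carrier A"
    using ideal.Icarr[OF P] by blast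
  then show ?thesis
    using ring_hom_ring.ideal_vimage[OF fst_ring_hom P] by (simp add: prime_f_eq_vimage)
qed

lemma zero_J_mem_primeideal:
  assumes Q: "primeideal Q AJ" and j: "j \<in> J"
  shows "(\<zero>\<^bsub>A\<^esub>, j) \<in> Q"
proof -
  interpret Q: primeideal Q AJ by (rule Q)
  obtain n where "j [^]\<^bsub>B\<^esub> (n::nat) = \<zero>\<^bsub>B\<^esub>"
    using j J_nil by (auto simp: nilradical_def)
  moreover have "(\<zero>\<^bsub>A\<^esub>, j) \<in> carrier AJ"
    using j J.Icarr by (auto simp: mem_carrier_amalg_iff)
  ultimately show ?thesis
    using Q.nilpotent_mem[of "(\<zero>\<^bsub>A\<^esub>, j)" "Suc n"] j J.Icarr
    by (simp add: amalg_nat_pow A.nat_pow_zero)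
qed

lemma primeideal_translate_iff:
  assumes Q: "primeideal Q AJ" and a: "a \<in> carrier A" and j: "j \<in> J"
  shows "(a, f a \<oplus>\<^bsub>B\<^esub> j) \<in> Q \<longleftrightarrow> (a, f a) \<in> Q"
proof -
  have add_closed: "x \<oplus>\<^bsub>AJ\<^esub> y \<in> Q" if "x \<in> Q" "y \<in> Q" for x y
    using additive_subgroup.a_closed[OF ideal.axioms(1)[OF primeideal.axioms(1)[OF Q]] that] .
  have carr: "f a \<in> carrier B" "j \<in> carrier B"
    using a j J.Icarr by auto
  show ?thesis
  proof
    assume "(a, f a \<oplus>\<^bsub>B\<^esub> j) \<in> Q"
    from add_closed[OF this zero_J_mem_primeideal[OF Q J.a_inv_closed[OF j]]]
    show "(a, f a) \<in> Q"
      using a carr by (simp add: B.a_assoc B.r_neg)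
  next
    assume "(a, f a) \<in> Q"
    from add_closed[OF this zero_J_mem_primeideal[OF Q j]]
    show "(a, f a \<oplus>\<^bsub>B\<^esub> j) \<in> Q"
      using a carr by simp
  qed
qed

lemma primeideal_eq_prime_f_contraction:
  assumes Q: "primeideal Q AJ"
  shows "Q = prime_f B f J {a \<in> carrier A. iotaA f a \<in> Q}"
proof
  show "Q \<subseteq> prime_f B f J {a \<in> carrier A. iotaA f a \<in> Q}"
  proof
    fix z assume z: "z \<in> Q"
    then have "z \<in> carrier AJ"
      using ideal.Icarr[OF primeideal.axioms(1)[OF Q]] by blast
    then obtain a j where "z = (a, f a \<oplus>\<^bsub>B\<^esub> j)" "a \<in> carrier A" "j \<in> J"
      unfolding carrier_amalg by blast
    then show "z \<in> prime_f B f J {a \<in> carrier A. iotaA f a \<in> Q}"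
      using z primeideal_translate_iff[OF Q] by (auto simp: prime_f_def iotaA_def)
  qed
  show "prime_f B f J {a \<in> carrier A. iotaA f a \<in> Q} \<subseteq> Q"
    using primeideal_translate_iff[OF Q] by (auto simp: prime_f_def iotaA_def)
qed

lemma prime_spectrum_iso_prime_f: "prime_spectrum_iso A AJ (prime_f B f J)"
proof (rule prime_spectrum_iso.intro)
  show "primeideal P A \<Longrightarrow> primeideal (prime_f B f J P) AJ" for P
    by (rule primeideal_prime_f)
  show "\<exists>P. primeideal P A \<and> Q = prime_f B f J P" if "primeideal Q AJ" for Q
    using ring_hom_ring.primeideal_vimage[OF iotaA_ring_hom A.cring_axioms that]
      primeideal_eq_prime_f_contraction[OF that] by blast
  show "prime_f B f J P \<subseteq> prime_f B f J P' \<longleftrightarrow> P \<subseteq> P'"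
    if "primeideal P A" "primeideal P' A" for P P'
    by (rule prime_f_subset_iff[OF J_not_empty])
qed

sublocale prime_f: prime_spectrum_iso A AJ "prime_f B f J"
  by (rule prime_spectrum_iso_prime_f)

lemma ext_ideal_subset_prime_f_iff:
  assumes I: "ideal I A" and P: "ideal P A"
  shows "ext_ideal A B f J I \<subseteq> prime_f B f J P \<longleftrightarrow> I \<subseteq> P"
proof
  have "iotaA f ` I \<subseteq> carrier AJ"
    using ring_hom_closed[OF ring_hom_ring.homh[OF iotaA_ring_hom]] ideal.Icarr[OF I] by blast
  then have "iotaA f ` I \<subseteq> ext_ideal A B f J I"
    unfolding ext_ideal_def by (rule ring.genideal_self[OF ring_amalg])
  moreover assume "ext_ideal A B f J I \<subseteq> prime_f B f J P"
  ultimately have "fst ` iotaA f ` I \<subseteq> fst ` prime_f B f J P"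
    by (intro image_mono) (rule subset_trans)
  then show "I \<subseteq> P"
    by (simp add: fst_image_prime_f[OF J_not_empty] image_image iotaA_def)
next
  assume "I \<subseteq> P"
  have "iotaA f a \<in> prime_f B f J P" if "a \<in> I" for a
  proof -
    have "iotaA f a = (a, f a \<oplus>\<^bsub>B\<^esub> \<zero>\<^bsub>B\<^esub>)"
      using that ideal.Icarr[OF I] by (simp add: iotaA_def)
    then show ?thesis
      unfolding prime_f_def using that \<open>I \<subseteq> P\<close> J.zero_closed by blast
  qed
  then have "iotaA f ` I \<subseteq> prime_f B f J P"
    by blast
  then show "ext_ideal A B f J I \<subseteq> prime_f B f J P"
    unfolding ext_ideal_def by (rule ring.genideal_minimal[OF ring_amalg ideal_prime_f[OF P]])
qed

end

theorem lemma4p4: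
  fixes A :: "('a, 'm) ring_scheme" and B :: "('b, 'n) ring_scheme"
    and f :: "'a \<Rightarrow> 'b" and J :: "'b set" and \<a> :: "'a set" and \<p> :: "'a set"
  assumes "cring A" and "cring B" and "f \<in> ring_hom A B"
    and "ideal J B" and "J \<subseteq> nilradical B"
    and "ideal \<a> A" and "primeideal \<p> A"
  shows "(minimal_prime_over A \<a> \<p> \<longleftrightarrow>
            minimal_prime_over (amalg A B f J) (ext_ideal A B f J \<a>) (prime_f B f J \<p>))
       \<and> height A \<a> = height (amalg A B f J) (ext_ideal A B f J \<a>)
       \<and> {Q. minimal_prime_over (amalg A B f J) (ext_ideal A B f J \<p>) Q} = {prime_f B f J \<p>}
       \<and> height (amalg A B f J) (ext_ideal A B f J \<p>) = height (amalg A B f J) (prime_f B f J \<p>)"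
proof -
  interpret amalgamation A B f J
    using assms(1-5) by (intro amalgamation.intro amalgamation_axioms.intro)
  note \<a> = assms(6) and \<p> = assms(7)
  have ext_subset_iff: "ext_ideal A B f J I \<subseteq> prime_f B f J Q \<longleftrightarrow> I \<subseteq> Q"
    if "ideal I A" "primeideal Q A" for I Q
    using ext_ideal_subset_prime_f_iff[OF that(1) primeideal.axioms(1)[OF that(2)]] .
  have same_primes: "ext_ideal A B f J \<p> \<subseteq> Q \<longleftrightarrow> prime_f B f J \<p> \<subseteq> Q"
    if Q: "primeideal Q AJ" for Q
  proof -
    obtain q where q: "primeideal q A" "Q = prime_f B f J q"
      using prime_f.primeideal_surj[OF Q] by blast
    then show ?thesis
      using ext_subset_iff[OF primeideal.axioms(1)[OF \<p>] q(1)] prime_f.map_subset_iff[OF \<p> q(1)]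
      by simp
  qed
  show ?thesis
    using prime_f.minimal_prime_over_map_iff[OF ext_subset_iff[OF \<a>] \<p>]
      prime_f.height_map[OF ext_subset_iff[OF \<a>]]
      minimal_prime_over_cong[of AJ, OF same_primes] height_cong[of AJ, OF same_primes]
      minimal_prime_over_self[OF prime_f.primeideal_map[OF \<p>]]
    by simp
qed

end
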